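(* Let $n\ge 1$ be an integer and $0<\gamma<1$. Then no root $\lambda$ of $D_a(\lambda)=\lambda^{2n-1}(\lambda-\gamma)^2-(1-\gamma)^2$ satisfies $|\lambda|>1$. *)

theory Defs
  imports "HOL-Analysis.Analysis"
begin

end

theory Submission
  imports Defs
begin

text \<open>Outside the closed unit disc both factors of \<open>z ^ (2n-1) * (z - \<gamma>)\<^sup>2\<close> are too large:
  \<open>|z| ^ (2n-1) \<ge> 1\<close> and \<open>|z - \<gamma>| \<ge> |z| - \<gamma> > 1 - \<gamma>\<close>, so the product has modulus
  strictly greater than \<open>(1 - \<gamma>)\<^sup>2\<close>.\<close>

lemma norm_diff_of_real_gt:
  fixes z :: "'a::real_normed_algebra_1"
  assumes "norm z > 1"
  shows "norm (z - of_real g) > 1 - \<bar>g\<bar>"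
  using norm_triangle_ineq2 [of z "of_real g"] assms by simp

lemma norm_power_mult_diff_of_real_sq_gt:
  fixes z :: "'a::real_normed_field"
  assumes "norm z > 1" and "\<bar>g\<bar> \<le> 1"
  shows "(1 - \<bar>g\<bar>)\<^sup>2 < norm (z ^ m * (z - of_real g)\<^sup>2)"
proof -
  have "(1 - \<bar>g\<bar>)\<^sup>2 < norm (z - of_real g) ^ 2"
    using norm_diff_of_real_gt [OF assms(1)] assms(2) by (simp add: power_strict_mono)
  also have "\<dots> \<le> norm z ^ m * norm (z - of_real g) ^ 2"
    using assms(1) by (simp add: one_le_power mult_le_cancel_right1)
  also have "\<dots> = norm (z ^ m * (z - of_real g)\<^sup>2)"
    by (simp add: norm_mult norm_power)
  finally show ?thesis .
qed

theorem proposition2: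
  fixes n :: nat and g :: real and z :: complex
  assumes "n \<ge> 1" and "0 < g" and "g < 1"
    and "z ^ (2*n - 1) * (z - of_real g)^2 - (of_real (1 - g))^2 = 0"
  shows "\<not> (norm z > 1)"
proof
  assume "norm z > 1"
  then have "(1 - g)\<^sup>2 < norm (z ^ (2*n - 1) * (z - of_real g)\<^sup>2)"
    using norm_power_mult_diff_of_real_sq_gt [of z g] assms(2,3) by simp
  also have "\<dots> = norm ((of_real (1 - g) :: complex)\<^sup>2)"
    using assms(4) by simp
  also have "\<dots> = (1 - g)\<^sup>2"
    by (simp only: norm_power norm_of_real power2_abs)
  finally show False by simp
qed

end
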